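(* Let $D$ be an Eulerian digraph (finite, without loops, parallel arcs or digons), let $\mathcal{F}(D)$ be a cycle decomposition of $D$, and let $v\in V(D)$. Let $\mathcal{C}_v\subseteq\mathcal{F}(D)$ be the set of dicycles of $\mathcal{F}(D)$ passing through $v$, and suppose that in the dicycle intersection graph $CI(D)$ associated with $\mathcal{F}(D)$ the set $\mathcal{C}_v$ induces a simple clique corresponding to the single vertex $v$, i.e. any two distinct dicycles in $\mathcal{C}_v$ have $v$ as their unique common vertex. Then $v\in SV(D)$, i.e. $|N^{+2}(v)|\ge|N^{+}(v)|$.
   Context: All digraphs are finite, with no loops, no parallel arcs and no digons (a digon is a pair of arcs $u\to w$, $w\to u$), so every dicycle has length at least $3$. $N^{+}(v)$ is the set of out-neighbours of $v$; $N^{+2}(v)$ is the set of vertices $w\notin N^{+}(v)\cup\{v\}$ such that $u\to w$ is an arc for some $u\in N^{+}(v)$; $SV(D)$ is the set of vertices $v$ with $|N^{+2}(v)|\ge|N^{+}(v)|$. An Eulerian digraph is a (weakly) connected digraph with $d^{+}(x)=d^{-}(x)$ for all vertices $x$. A cycle decomposition $\mathcal{F}(D)$ is a set of dicycles whose arc sets partition $A(D)$. The dicycle intersection graph $CI(D)$ associated with $\mathcal{F}(D)$ is the multigraph with vertex set $\mathcal{F}(D)$ having, for each pair of distinct dicycles $C,C'$ and each vertex of $D$ lying on both, one edge between $C$ and $C'$. *)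

theory Defs
  imports Main
begin

text \<open>A digraph is given by a finite vertex set V and an arc relation A.
  Parallel arcs are excluded by representing arcs as a set of pairs.\<close>

definition digraph :: "'a set \<Rightarrow> ('a \<times> 'a) set \<Rightarrow> bool" where
  "digraph V A \<longleftrightarrow> finite V \<and> A \<subseteq> V \<times> V
     \<and> (\<forall>x. (x, x) \<notin> A)
     \<and> (\<forall>u w. (u, w) \<in> A \<longrightarrow> (w, u) \<notin> A)"

definition weakly_connected :: "'a set \<Rightarrow> ('a \<times> 'a) set \<Rightarrow> bool" where
  "weakly_connected V A \<longleftrightarrow> (\<forall>x\<in>V. \<forall>y\<in>V. (x, y) \<in> (A \<union> A\<inverse>)\<^sup>*)"

definition out_nbrs :: "('a \<times> 'a) set \<Rightarrow> 'a \<Rightarrow> 'a set" where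
  "out_nbrs A v = {w. (v, w) \<in> A}"

definition in_nbrs :: "('a \<times> 'a) set \<Rightarrow> 'a \<Rightarrow> 'a set" where
  "in_nbrs A v = {u. (u, v) \<in> A}"

definition eulerian :: "'a set \<Rightarrow> ('a \<times> 'a) set \<Rightarrow> bool" where
  "eulerian V A \<longleftrightarrow> digraph V A \<and> weakly_connected V A
     \<and> (\<forall>x\<in>V. card (out_nbrs A x) = card (in_nbrs A x))"

definition out2_nbrs :: "('a \<times> 'a) set \<Rightarrow> 'a \<Rightarrow> 'a set" where
  "out2_nbrs A v = {w. w \<notin> out_nbrs A v \<and> w \<noteq> v \<and> (\<exists>u\<in>out_nbrs A v. (u, w) \<in> A)}"

definition SV :: "'a set \<Rightarrow> ('a \<times> 'a) set \<Rightarrow> 'a set" where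
  "SV V A = {v\<in>V. card (out2_nbrs A v) \<ge> card (out_nbrs A v)}"

definition cycle_arcs :: "'a list \<Rightarrow> ('a \<times> 'a) set" where
  "cycle_arcs xs = {(xs ! i, xs ! ((i + 1) mod length xs)) | i. i < length xs}"

definition is_dicycle_list :: "('a \<times> 'a) set \<Rightarrow> 'a list \<Rightarrow> bool" where
  "is_dicycle_list A xs \<longleftrightarrow> distinct xs \<and> length xs \<ge> 3 \<and> cycle_arcs xs \<subseteq> A"

text \<open>A dicycle of D is identified with its arc set.\<close>
definition is_dicycle :: "('a \<times> 'a) set \<Rightarrow> ('a \<times> 'a) set \<Rightarrow> bool" where
  "is_dicycle A C \<longleftrightarrow> (\<exists>xs. is_dicycle_list A xs \<and> C = cycle_arcs xs)"

definition cverts :: "('a \<times> 'a) set \<Rightarrow> 'a set" where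
  "cverts C = fst ` C"

definition cycle_decomposition :: "('a \<times> 'a) set \<Rightarrow> ('a \<times> 'a) set set \<Rightarrow> bool" where
  "cycle_decomposition A F \<longleftrightarrow> (\<forall>C\<in>F. is_dicycle A C) \<and> \<Union>F = A
     \<and> (\<forall>C\<in>F. \<forall>C'\<in>F. C \<noteq> C' \<longrightarrow> C \<inter> C' = {})"

definition cycles_through :: "('a \<times> 'a) set set \<Rightarrow> 'a \<Rightarrow> ('a \<times> 'a) set set" where
  "cycles_through F v = {C\<in>F. v \<in> cverts C}"

end

theory Submission
  imports Defs
begin

text \<open>Each out-neighbour w of v lies on the unique cycle C_w of the decomposition containing the
  arc (v, w); let f w be the vertex following w on C_w, so f w \<noteq> v because C_w has length at
  least 3. Since distinct cycles through v meet only in v, the vertex f w \<noteq> v determines C_w,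
  and C_w determines w as the successor of v; hence f is injective. Moreover f w is not an
  out-neighbour of v: otherwise the arc (v, f w) would lie on C_w as well, forcing f w = w.
  So f embeds the out-neighbourhood of v into its second out-neighbourhood.\<close>

lemma mem_cycle_arcs_iff:
  "p \<in> cycle_arcs xs \<longleftrightarrow> (\<exists>i<length xs. p = (xs ! i, xs ! (Suc i mod length xs)))"
  unfolding cycle_arcs_def by auto

lemma cverts_cycle_arcs: "cverts (cycle_arcs xs) = set xs"
  unfolding cverts_def cycle_arcs_def by (force simp: in_set_conv_nth)

lemma cycle_arcs_target_in_set:
  assumes "(u, w) \<in> cycle_arcs xs"
  shows "w \<in> set xs"
proof -
  from assms obtain i where "i < length xs" "w = xs ! (Suc i mod length xs)"
    by (auto simp: mem_cycle_arcs_iff)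
  moreover from \<open>i < length xs\<close> have "Suc i mod length xs < length xs"
    by (intro mod_less_divisor) linarith
  ultimately show ?thesis by simp
qed

lemma cycle_arcs_out_unique:
  assumes "distinct xs" "(u, w) \<in> cycle_arcs xs" "(u, w') \<in> cycle_arcs xs"
  shows "w = w'"
  using assms by (auto simp: mem_cycle_arcs_iff nth_eq_iff_index_eq)

lemma cycle_arcs_next_arc:
  assumes "distinct xs" "length xs \<ge> 3" "(u, w) \<in> cycle_arcs xs"
  shows "\<exists>x. (w, x) \<in> cycle_arcs xs \<and> x \<noteq> u"
proof -
  let ?n = "length xs"
  from assms(3) obtain i where i: "i < ?n" "u = xs ! i" "w = xs ! (Suc i mod ?n)"
    by (auto simp: mem_cycle_arcs_iff)
  let ?j = "Suc i mod ?n"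
  let ?k = "Suc ?j mod ?n"
  have "0 < ?n" using i(1) by linarith
  then have "?j < ?n" "?k < ?n" by simp_all
  have "?k = Suc (Suc i) mod ?n" by (simp add: mod_Suc_eq)
  moreover have "Suc (Suc i) mod ?n \<noteq> i"
    using i(1) assms(2) by (cases "Suc (Suc i) < ?n") (auto simp: mod_if)
  ultimately have "xs ! ?k \<noteq> u"
    using i \<open>?k < ?n\<close> assms(1) by (simp add: nth_eq_iff_index_eq)
  moreover have "(w, xs ! ?k) \<in> cycle_arcs xs"
    using \<open>?j < ?n\<close> i by (auto simp: mem_cycle_arcs_iff)
  ultimately show ?thesis by blast
qed

lemma is_dicycle_target_in_cverts:
  assumes "is_dicycle A C" "(u, w) \<in> C"
  shows "w \<in> cverts C"
  using assms cycle_arcs_target_in_set cverts_cycle_arcs unfolding is_dicycle_def by metis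

lemma is_dicycle_out_unique:
  assumes "is_dicycle A C" "(u, w) \<in> C" "(u, w') \<in> C"
  shows "w = w'"
  using assms cycle_arcs_out_unique unfolding is_dicycle_def is_dicycle_list_def by metis

lemma is_dicycle_next_arc:
  assumes "is_dicycle A C" "(u, w) \<in> C"
  shows "\<exists>x. (w, x) \<in> C \<and> x \<noteq> u"
  using assms cycle_arcs_next_arc unfolding is_dicycle_def is_dicycle_list_def by metis

lemma card_out_nbrs_le_card_out2_nbrs:
  assumes decomp: "cycle_decomposition A F"
    and irrefl: "\<And>x. (x, x) \<notin> A"
    and fin: "finite (out2_nbrs A v)"
    and clique: "\<forall>C\<in>cycles_through F v. \<forall>C'\<in>cycles_through F v.
                    C \<noteq> C' \<longrightarrow> cverts C \<inter> cverts C' = {v}"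
  shows "card (out_nbrs A v) \<le> card (out2_nbrs A v)"
proof -
  have dicycle: "\<And>C. C \<in> F \<Longrightarrow> is_dicycle A C" and arcs: "\<Union>F = A"
    using decomp unfolding cycle_decomposition_def by blast+
  have through_v: "C \<in> cycles_through F v" if "C \<in> F" "(v, w) \<in> C" for C w
    using that unfolding cycles_through_def cverts_def by force
  have same_cycle: "C = C'"
    if "C \<in> F" "(v, w) \<in> C" "C' \<in> F" "(v, w') \<in> C'" "y \<in> cverts C" "y \<in> cverts C'" "y \<noteq> v"
    for C C' w w' y
  proof (rule ccontr)
    assume "C \<noteq> C'"
    then have "cverts C \<inter> cverts C' = {v}"
      using clique through_v[OF that(1,2)] through_v[OF that(3,4)] by blast
    then show False using that(5-7) by blast
  qed
  have "\<forall>w\<in>out_nbrs A v. \<exists>C x. C \<in> F \<and> (v, w) \<in> C \<and> (w, x) \<in> C \<and> x \<noteq> v"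
    using arcs is_dicycle_next_arc[OF dicycle] unfolding out_nbrs_def by blast
  from bchoice[OF this] obtain C
    where "\<forall>w\<in>out_nbrs A v. \<exists>x. C w \<in> F \<and> (v, w) \<in> C w \<and> (w, x) \<in> C w \<and> x \<noteq> v"
    by blast
  from bchoice[OF this] obtain f where Cf: "\<And>w. w \<in> out_nbrs A v \<Longrightarrow>
      C w \<in> F \<and> (v, w) \<in> C w \<and> (w, f w) \<in> C w \<and> f w \<noteq> v"
    by blast
  have f_on_C: "f w \<in> cverts (C w)" if "w \<in> out_nbrs A v" for w
    using is_dicycle_target_in_cverts[of A "C w" w "f w"] dicycle Cf[OF that] by blast
  have "inj_on f (out_nbrs A v)"
  proof (rule inj_onI)
    fix w w' assume w: "w \<in> out_nbrs A v" and w': "w' \<in> out_nbrs A v" and "f w = f w'"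
    then have "C w = C w'"
      using same_cycle[of "C w" w "C w'" w' "f w"] Cf[OF w] Cf[OF w'] f_on_C[OF w] f_on_C[OF w']
      by simp
    then show "w = w'"
      using is_dicycle_out_unique[of A "C w" v w w'] dicycle Cf[OF w] Cf[OF w'] by simp
  qed
  moreover have "f ` out_nbrs A v \<subseteq> out2_nbrs A v"
  proof
    fix y assume "y \<in> f ` out_nbrs A v"
    then obtain w where w: "w \<in> out_nbrs A v" and y: "y = f w" by blast
    have wy: "(w, y) \<in> A" using Cf[OF w] arcs y by blast
    have "y \<notin> out_nbrs A v"
    proof
      assume "y \<in> out_nbrs A v"
      then obtain C' where C': "C' \<in> F" "(v, y) \<in> C'"
        using arcs unfolding out_nbrs_def by blast
      have "y \<in> cverts C'" using is_dicycle_target_in_cverts[of A C' v y] dicycle C' by blast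
      then have "C' = C w"
        using same_cycle[of C' y "C w" w y] C' Cf[OF w] f_on_C[OF w] y by blast
      then have "y = w" using is_dicycle_out_unique[of A C' v y w] dicycle C' Cf[OF w] by simp
      then show False using wy irrefl by simp
    qed
    then show "y \<in> out2_nbrs A v"
      using w wy Cf[OF w] y unfolding out2_nbrs_def by blast
  qed
  ultimately show ?thesis using card_inj_on_le fin by blast
qed

theorem mainTheorem5:
  fixes V :: "'a set" and A :: "('a \<times> 'a) set" and F :: "('a \<times> 'a) set set" and v :: 'a
  assumes "eulerian V A"
    and "cycle_decomposition A F"
    and "v \<in> V"
    and "\<forall>C\<in>cycles_through F v. \<forall>C'\<in>cycles_through F v.
            C \<noteq> C' \<longrightarrow> cverts C \<inter> cverts C' = {v}"
  shows "v \<in> SV V A"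
proof -
  have "finite V" and "A \<subseteq> V \<times> V" and irrefl: "\<And>x. (x, x) \<notin> A"
    using assms(1) unfolding eulerian_def digraph_def by blast+
  then have "finite (out2_nbrs A v)"
    using finite_subset[of "out2_nbrs A v" V] by (auto simp: out2_nbrs_def)
  then have "card (out_nbrs A v) \<le> card (out2_nbrs A v)"
    using card_out_nbrs_le_card_out2_nbrs[OF assms(2) irrefl _ assms(4)] by blast
  then show ?thesis using assms(3) unfolding SV_def by blast
qed

end
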